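(* Let $Y,Z$ be finite-dimensional real or complex vector spaces, let $f$ be a vector field on $Y$, let $F\colon Y\to Z$ be quadratic, and let $g,\gamma$ be vector fields on $Z$ such that $F'(y)f(y)=g(F(y))$ and $F''(f(y),f(y))=\gamma(F(y))$ for all $y\in Y$. Let nonzero $b_1,\dots,b_s$ and $h>0$ be given, and suppose $y_0,y_1,Y_1,\dots,Y_s\in Y$ satisfy the SyDIRK equations \[ Y_i = y_0 + h\sum_{j=1}^{i-1} b_j f(Y_j) + \frac h2 b_i f(Y_i)\ (i=1,\dots,s),\qquad y_1 = y_0 + h\sum_{i=1}^s b_i f(Y_i). \] Then $z_0:=F(y_0)$, $Z_i:=F(Y_i)$, $z_1:=F(y_1)$ satisfy \[ Z_i = z_0 + h\sum_{j=1}^{i-1} b_j g(Z_j) + \frac h2 b_i g(Z_i) - \frac{h^2}{8} b_i^2\gamma(Z_i)\ (i=1,\dots,s),\qquad z_1 = z_0 + h\sum_{i=1}^s b_i g(Z_i). \]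
   Context: A map $F\colon Y\to Z$ is quadratic if for every $y_0\in Y$, $F(y)=F(y_0)+F'(y_0)(y-y_0)+\tfrac12F''(y-y_0,y-y_0)$ for all $y$, with $F''$ a constant symmetric bilinear map $Y\times Y\to Z$. *)

theory Defs
  imports "HOL-Analysis.Analysis"
begin

definition quadratic_map ::
  "('y::real_vector \<Rightarrow> 'z::real_vector) \<Rightarrow> ('y \<Rightarrow> 'y \<Rightarrow> 'z) \<Rightarrow> ('y \<Rightarrow> 'y \<Rightarrow> 'z) \<Rightarrow> bool" where
  "quadratic_map F F' F'' \<longleftrightarrow>
     (\<forall>y0. linear (F' y0)) \<and> bilinear F'' \<and> (\<forall>u v. F'' u v = F'' v u) \<and>
     (\<forall>y0 y. F y = F y0 + F' y0 (y - y0) + (1/2) *\<^sub>R F'' (y - y0) (y - y0))"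

end

theory Submission
  imports Defs
begin

text \<open>Each SyDIRK stage consists of two half steps of length c = h b_i / 2 through the stage
  value Y_i: the entry point P_i = y_0 + h (sum of b_j f(Y_j) over j < i) satisfies P_i = Y_i - c f(Y_i),
  and P_(i+1) = Y_i + c f(Y_i). Since F is quadratic, F(Y + c f(Y)) = F(Y) + c g(F Y) + c^2/2 gamma(F Y),
  so the gamma-terms cancel in F(P_(i+1)) - F(P_i) = h b_i g(Z_i). Telescoping gives
  F(P_i) = z_0 + h (sum of b_j g(Z_j) over j < i); the backward half step from Y_i then yields the
  stage equation for Z_i, and P_(s+1) = y_1 gives the update for z_1.\<close>

lemma quadratic_map_along_line:
  assumes "quadratic_map F F' F''"
  shows "F (y + c *\<^sub>R v) = F y + c *\<^sub>R F' y v + (c\<^sup>2 / 2) *\<^sub>R F'' v v"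
proof -
  from assms have "linear (F' y)" and "bilinear F''"
    and expand: "F (y + c *\<^sub>R v) = F y + F' y (c *\<^sub>R v) + (1/2) *\<^sub>R F'' (c *\<^sub>R v) (c *\<^sub>R v)"
    unfolding quadratic_map_def by (metis add_diff_cancel_left')+
  then have "F' y (c *\<^sub>R v) = c *\<^sub>R F' y v" and "F'' (c *\<^sub>R v) (c *\<^sub>R v) = (c * c) *\<^sub>R F'' v v"
    by (simp_all add: linear_scale bilinear_lmul bilinear_rmul)
  with expand show ?thesis
    by (simp add: power2_eq_square)
qed

lemma quadratic_map_along_field:
  assumes "quadratic_map F F' F''"
    and "\<And>y. F' y (f y) = g (F y)"
    and "\<And>y. F'' (f y) (f y) = \<gamma> (F y)"
  shows "F (y + c *\<^sub>R f y) = F y + c *\<^sub>R g (F y) + (c\<^sup>2 / 2) *\<^sub>R \<gamma> (F y)"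
  using quadratic_map_along_line[OF assms(1)] assms(2,3) by simp

lemma quadratic_map_field_symmetric_difference:
  assumes "quadratic_map F F' F''"
    and "\<And>y. F' y (f y) = g (F y)"
    and "\<And>y. F'' (f y) (f y) = \<gamma> (F y)"
  shows "F (y + c *\<^sub>R f y) - F (y - c *\<^sub>R f y) = (2 * c) *\<^sub>R g (F y)"
  using quadratic_map_along_field[OF assms, of y c] quadratic_map_along_field[OF assms, of y "- c"]
  by (simp flip: scaleR_2 add: scaleR_scaleR)

lemma sydirk_stage_entries_image:
  fixes f :: "'y::real_vector \<Rightarrow> 'y" and F :: "'y \<Rightarrow> 'z::real_vector"
  assumes quad: "quadratic_map F F' F''"
    and hg: "\<And>y. F' y (f y) = g (F y)"
    and hgamma: "\<And>y. F'' (f y) (f y) = \<gamma> (F y)"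
    and stages: "\<And>i. i \<in> {1..s} \<Longrightarrow>
       Ys i = y0 + h *\<^sub>R (\<Sum>j\<in>{1..<i}. b j *\<^sub>R f (Ys j)) + (h / 2 * b i) *\<^sub>R f (Ys i)"
    and n: "1 \<le> n" "n \<le> Suc s"
  shows "F (y0 + h *\<^sub>R (\<Sum>j\<in>{1..<n}. b j *\<^sub>R f (Ys j)))
         = F y0 + h *\<^sub>R (\<Sum>j\<in>{1..<n}. b j *\<^sub>R g (F (Ys j)))"
proof -
  define P where "P i = y0 + h *\<^sub>R (\<Sum>j\<in>{1..<i}. b j *\<^sub>R f (Ys j))" for i
  have increment: "F (P (Suc i)) - F (P i) = h *\<^sub>R (b i *\<^sub>R g (F (Ys i)))" if i: "i \<in> {1..s}" for i
  proof -
    let ?c = "h / 2 * b i"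
    have entry: "P i = Ys i - ?c *\<^sub>R f (Ys i)"
      using stages[OF i] by (simp add: P_def algebra_simps)
    have "P (Suc i) = P i + (h * b i) *\<^sub>R f (Ys i)"
      using i by (simp add: P_def scaleR_add_right)
    also have "\<dots> = Ys i + ?c *\<^sub>R f (Ys i)"
      unfolding entry by (simp add: algebra_simps flip: scaleR_add_left)
    finally show ?thesis
      using entry quadratic_map_field_symmetric_difference[OF quad hg hgamma, of "Ys i" ?c] by simp
  qed
  have "F (P n) - F (P 1) = (\<Sum>i\<in>{1..<n}. F (P (Suc i)) - F (P i))"
    using sum_Suc_diff'[OF \<open>1 \<le> n\<close>, of "\<lambda>i. F (P i)"] by simp
  also have "\<dots> = h *\<^sub>R (\<Sum>j\<in>{1..<n}. b j *\<^sub>R g (F (Ys j)))"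
    using n by (simp add: increment scaleR_sum_right)
  finally show ?thesis
    by (simp add: P_def algebra_simps)
qed

theorem corollary2p8:
  fixes f :: "'y::euclidean_space \<Rightarrow> 'y"
    and F :: "'y \<Rightarrow> 'z::euclidean_space"
    and F' :: "'y \<Rightarrow> 'y \<Rightarrow> 'z" and F'' :: "'y \<Rightarrow> 'y \<Rightarrow> 'z"
    and g \<gamma> :: "'z \<Rightarrow> 'z"
    and s :: nat and b :: "nat \<Rightarrow> real" and h :: real
    and y0 y1 :: 'y and Ys :: "nat \<Rightarrow> 'y"
  assumes quad: "quadratic_map F F' F''"
    and hg: "\<And>y. F' y (f y) = g (F y)"
    and hgamma: "\<And>y. F'' (f y) (f y) = \<gamma> (F y)"
    and b_nz: "\<And>i. i \<in> {1..s} \<Longrightarrow> b i \<noteq> 0"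
    and h_pos: "h > 0"
    and stages: "\<And>i. i \<in> {1..s} \<Longrightarrow>
       Ys i = y0 + h *\<^sub>R (\<Sum>j\<in>{1..<i}. b j *\<^sub>R f (Ys j)) + (h / 2 * b i) *\<^sub>R f (Ys i)"
    and step: "y1 = y0 + h *\<^sub>R (\<Sum>i\<in>{1..s}. b i *\<^sub>R f (Ys i))"
  shows "(\<forall>i\<in>{1..s}.
            F (Ys i) = F y0 + h *\<^sub>R (\<Sum>j\<in>{1..<i}. b j *\<^sub>R g (F (Ys j)))
                       + (h / 2 * b i) *\<^sub>R g (F (Ys i))
                       - (h\<^sup>2 / 8 * (b i)\<^sup>2) *\<^sub>R \<gamma> (F (Ys i)))
         \<and> F y1 = F y0 + h *\<^sub>R (\<Sum>i\<in>{1..s}. b i *\<^sub>R g (F (Ys i)))"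
proof (intro conjI ballI)
  fix i assume i: "i \<in> {1..s}"
  let ?c = "h / 2 * b i"
  have entry: "y0 + h *\<^sub>R (\<Sum>j\<in>{1..<i}. b j *\<^sub>R f (Ys j)) = Ys i + (- ?c) *\<^sub>R f (Ys i)"
    using stages[OF i] by (simp add: algebra_simps)
  have "?c\<^sup>2 / 2 = h\<^sup>2 / 8 * (b i)\<^sup>2"
    by (simp add: power2_eq_square)
  then have "F (Ys i) - ?c *\<^sub>R g (F (Ys i)) + (h\<^sup>2 / 8 * (b i)\<^sup>2) *\<^sub>R \<gamma> (F (Ys i))
        = F (y0 + h *\<^sub>R (\<Sum>j\<in>{1..<i}. b j *\<^sub>R f (Ys j)))"
    unfolding entry quadratic_map_along_field[OF quad hg hgamma] by simp
  also have "\<dots> = F y0 + h *\<^sub>R (\<Sum>j\<in>{1..<i}. b j *\<^sub>R g (F (Ys j)))"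
    using sydirk_stage_entries_image[where s = s and n = i, OF quad hg hgamma stages] i by simp
  finally show "F (Ys i) = F y0 + h *\<^sub>R (\<Sum>j\<in>{1..<i}. b j *\<^sub>R g (F (Ys j)))
      + ?c *\<^sub>R g (F (Ys i)) - (h\<^sup>2 / 8 * (b i)\<^sup>2) *\<^sub>R \<gamma> (F (Ys i))"
    by (simp add: algebra_simps)
next
  show "F y1 = F y0 + h *\<^sub>R (\<Sum>i\<in>{1..s}. b i *\<^sub>R g (F (Ys i)))"
    using sydirk_stage_entries_image[where s = s and n = "Suc s", OF quad hg hgamma stages] step
    by (simp add: atLeastLessThanSuc_atLeastAtMost)
qed

end
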